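(* Let $\mathcal{H}_1,\mathcal{H}_2$ be hypothesis classes and $\mathcal{H}=\mathcal{H}_1\cdot\mathcal{H}_2$. Then for all integers $t\ge0$, $\mathcal{S}(\mathcal{H},t)\le\mathcal{S}(\mathcal{H}_1,t)\cdot\mathcal{S}(\mathcal{H}_2,t)$.
   Context: Hypotheses are maps $\mathcal{X}\to\{-1,+1\}$; $\mathcal{H}_1\cdot\mathcal{H}_2=\{x\mapsto h_1(x)h_2(x):h_1\in\mathcal{H}_1,h_2\in\mathcal{H}_2\}$. A depth-$t$ $\mathcal{X}$-valued tree $\mathbf{x}$ is a sequence of maps $\mathbf{x}_s:\{\pm1\}^{s-1}\to\mathcal{X}$, $s=1,\dots,t$; write $\mathbf{x}_s(\epsilon)=\mathbf{x}_s(\epsilon_1,\dots,\epsilon_{s-1})$. $S(\mathcal{H},\mathbf{x})=\{\epsilon\in\{\pm1\}^t:\exists h\in\mathcal{H},\ \epsilon_s=h(\mathbf{x}_s(\epsilon))\ \forall s\le t\}$; $\mathcal{S}(\mathcal{H},t)=\max_{\mathbf{x}}|S(\mathcal{H},\mathbf{x})|$ over depth-$t$ trees for $t\ge1$, and $\mathcal{S}(\mathcal{H},0)=1$ if $\mathcal{H}\ne\emptyset$, $0$ otherwise. *)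

theory Defs
  imports Main
begin

text \<open>A depth-t tree is encoded as a single function on sign prefixes:
  node x_s(eps_1..eps_{s-1}) is tr [eps_1,...,eps_{s-1}] (0-indexed: position s reads tr (take s e)).\<close>

definition pm_hyp :: "('a \<Rightarrow> int) \<Rightarrow> bool" where
  "pm_hyp h \<longleftrightarrow> (\<forall>x. h x \<in> {-1, 1})"

definition prod_class :: "('a \<Rightarrow> int) set \<Rightarrow> ('a \<Rightarrow> int) set \<Rightarrow> ('a \<Rightarrow> int) set" where
  "prod_class H1 H2 = {(\<lambda>x. h1 x * h2 x) | h1 h2. h1 \<in> H1 \<and> h2 \<in> H2}"

definition pm_seqs :: "nat \<Rightarrow> int list set" where
  "pm_seqs t = {e. length e = t \<and> set e \<subseteq> {-1, 1}}"

definition tree_sign_patterns :: "('a \<Rightarrow> int) set \<Rightarrow> nat \<Rightarrow> (int list \<Rightarrow> 'a) \<Rightarrow> int list set" where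
  "tree_sign_patterns H t tr =
     {e \<in> pm_seqs t. \<exists>h\<in>H. \<forall>s<t. e ! s = h (tr (take s e))}"

definition seq_shatter :: "('a \<Rightarrow> int) set \<Rightarrow> nat \<Rightarrow> nat" where
  "seq_shatter H t =
     (if t = 0 then (if H \<noteq> {} then 1 else 0)
      else Max {card (tree_sign_patterns H t tr) | tr. True})"

end

theory Submission
  imports Defs
begin

text \<open>A pattern realised by \<open>h\<^sub>1 h\<^sub>2\<close> on a tree is the pointwise product of the two sign
  sequences that \<open>h\<^sub>1\<close> and \<open>h\<^sub>2\<close> produce along the same path, so it is determined by a pair of
  patterns realised on a ``joint'' tree, whose node may depend on both prefixes. Pairs on a joint
  tree are counted by induction on the depth: splitting by the values of \<open>h\<^sub>1\<close> and \<open>h\<^sub>2\<close> at the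
  root gives four subproblems, and the sizes of the two restrictions of a class at a point add up
  to at most the shatter value one level deeper (graft the two optimal trees below that point).\<close>

definition restrict_value :: "('a \<Rightarrow> int) set \<Rightarrow> 'a \<Rightarrow> int \<Rightarrow> ('a \<Rightarrow> int) set" where
  "restrict_value H x a = {h \<in> H. h x = a}"

lemma finite_pm_seqs: "finite (pm_seqs t)"
proof -
  have "finite {xs. set xs \<subseteq> {-1, 1::int} \<and> length xs = t}"
    by (rule finite_lists_length_eq) auto
  then show ?thesis
    by (rule finite_subset[rotated]) (auto simp: pm_seqs_def)
qed

lemma finite_tree_sign_patterns: "finite (tree_sign_patterns H t tr)"
  unfolding tree_sign_patterns_def using finite_pm_seqs by auto

lemma tree_sign_patterns_0: "tree_sign_patterns H 0 tr = (if H = {} then {} else {[]})"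
  by (auto simp: tree_sign_patterns_def pm_seqs_def)

lemma seq_shatter_eq_Max:
  "seq_shatter H t = Max {card (tree_sign_patterns H t tr) | tr. True}"
  by (simp add: seq_shatter_def tree_sign_patterns_0)

lemma finite_tree_sign_pattern_cards: "finite {card (tree_sign_patterns H t tr) | tr. True}"
proof -
  have "{card (tree_sign_patterns H t tr) | tr. True} \<subseteq> {..card (pm_seqs t)}"
    using finite_pm_seqs by (auto simp: tree_sign_patterns_def intro!: card_mono)
  then show ?thesis by (rule finite_subset) simp
qed

lemma card_tree_sign_patterns_le_seq_shatter:
  "card (tree_sign_patterns H t tr) \<le> seq_shatter H t"
  unfolding seq_shatter_eq_Max by (rule Max_ge[OF finite_tree_sign_pattern_cards]) auto

lemma seq_shatter_attained: obtains tr where "seq_shatter H t = card (tree_sign_patterns H t tr)"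
proof -
  have "seq_shatter H t \<in> {card (tree_sign_patterns H t tr) | tr. True}"
    unfolding seq_shatter_eq_Max by (rule Max_in[OF finite_tree_sign_pattern_cards]) auto
  then show ?thesis using that by blast
qed

lemma Cons_tree_sign_patterns_subset:
  assumes "a \<in> {-1, 1}" and "tr' [] = x" and "\<And>p. tr' (a # p) = tr p"
  shows "(#) a ` tree_sign_patterns (restrict_value H x a) t tr \<subseteq> tree_sign_patterns H (Suc t) tr'"
proof
  fix e assume "e \<in> (#) a ` tree_sign_patterns (restrict_value H x a) t tr"
  then obtain e' h where e: "e = a # e'" "e' \<in> pm_seqs t" "h \<in> H" "h x = a"
      and path: "\<forall>s<t. e' ! s = h (tr (take s e'))"
    by (auto simp: tree_sign_patterns_def restrict_value_def)
  have "e ! s = h (tr' (take s e))" if "s < Suc t" for s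
    using that e path assms(2,3) by (cases s) auto
  then show "e \<in> tree_sign_patterns H (Suc t) tr'"
    using e assms(1) by (auto simp: tree_sign_patterns_def pm_seqs_def)
qed

lemma seq_shatter_restrict_value_add_le:
  "seq_shatter (restrict_value H x 1) t + seq_shatter (restrict_value H x (-1)) t
     \<le> seq_shatter H (Suc t)"
proof -
  obtain tr\<^sub>p where p: "seq_shatter (restrict_value H x 1) t
      = card (tree_sign_patterns (restrict_value H x 1) t tr\<^sub>p)"
    by (rule seq_shatter_attained)
  obtain tr\<^sub>m where m: "seq_shatter (restrict_value H x (-1)) t
      = card (tree_sign_patterns (restrict_value H x (-1)) t tr\<^sub>m)"
    by (rule seq_shatter_attained)
  define tr' where "tr' = (\<lambda>l. case l of [] \<Rightarrow> x | a # p \<Rightarrow> if a = 1 then tr\<^sub>p p else tr\<^sub>m p)"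
  let ?A = "(#) 1 ` tree_sign_patterns (restrict_value H x 1) t tr\<^sub>p"
  let ?B = "(#) (-1) ` tree_sign_patterns (restrict_value H x (-1)) t tr\<^sub>m"
  have "?A \<subseteq> tree_sign_patterns H (Suc t) tr'" "?B \<subseteq> tree_sign_patterns H (Suc t) tr'"
    by (rule Cons_tree_sign_patterns_subset; simp add: tr'_def)+
  then have "card (?A \<union> ?B) \<le> card (tree_sign_patterns H (Suc t) tr')"
    by (intro card_mono finite_tree_sign_patterns) auto
  moreover have "card (?A \<union> ?B) = card ?A + card ?B"
    by (rule card_Un_disjoint) (auto simp: finite_tree_sign_patterns)
  ultimately show ?thesis
    using p m card_tree_sign_patterns_le_seq_shatter[of H "Suc t" tr']
    by (simp add: card_image)
qed

definition joint_sign_patterns ::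
  "('a \<Rightarrow> int) set \<Rightarrow> ('a \<Rightarrow> int) set \<Rightarrow> (int list \<Rightarrow> int list \<Rightarrow> 'a)
     \<Rightarrow> (int list \<Rightarrow> int list \<Rightarrow> 'a) \<Rightarrow> nat \<Rightarrow> (int list \<times> int list) set" where
  "joint_sign_patterns H\<^sub>1 H\<^sub>2 T\<^sub>1 T\<^sub>2 t = {(e\<^sub>1, e\<^sub>2). e\<^sub>1 \<in> pm_seqs t \<and> e\<^sub>2 \<in> pm_seqs t \<and>
     (\<exists>h\<^sub>1\<in>H\<^sub>1. \<exists>h\<^sub>2\<in>H\<^sub>2. \<forall>s<t. e\<^sub>1 ! s = h\<^sub>1 (T\<^sub>1 (take s e\<^sub>1) (take s e\<^sub>2))
        \<and> e\<^sub>2 ! s = h\<^sub>2 (T\<^sub>2 (take s e\<^sub>1) (take s e\<^sub>2)))}"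

lemma finite_joint_sign_patterns: "finite (joint_sign_patterns H\<^sub>1 H\<^sub>2 T\<^sub>1 T\<^sub>2 t)"
proof -
  have "joint_sign_patterns H\<^sub>1 H\<^sub>2 T\<^sub>1 T\<^sub>2 t \<subseteq> pm_seqs t \<times> pm_seqs t"
    unfolding joint_sign_patterns_def by auto
  then show ?thesis using finite_pm_seqs by (meson finite_SigmaI finite_subset)
qed

lemma joint_sign_patterns_Suc_subset:
  "joint_sign_patterns H\<^sub>1 H\<^sub>2 T\<^sub>1 T\<^sub>2 (Suc t) \<subseteq> (\<Union>a\<in>{1, -1}. \<Union>b\<in>{1, -1}.
     (\<lambda>(e\<^sub>1, e\<^sub>2). (a # e\<^sub>1, b # e\<^sub>2)) `
       joint_sign_patterns (restrict_value H\<^sub>1 (T\<^sub>1 [] []) a) (restrict_value H\<^sub>2 (T\<^sub>2 [] []) b)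
         (\<lambda>p q. T\<^sub>1 (a # p) (b # q)) (\<lambda>p q. T\<^sub>2 (a # p) (b # q)) t)"
proof (clarify)
  fix e\<^sub>1 e\<^sub>2 assume "(e\<^sub>1, e\<^sub>2) \<in> joint_sign_patterns H\<^sub>1 H\<^sub>2 T\<^sub>1 T\<^sub>2 (Suc t)"
  then obtain h\<^sub>1 h\<^sub>2 where h: "h\<^sub>1 \<in> H\<^sub>1" "h\<^sub>2 \<in> H\<^sub>2"
      and path: "\<forall>s<Suc t. e\<^sub>1 ! s = h\<^sub>1 (T\<^sub>1 (take s e\<^sub>1) (take s e\<^sub>2))
                         \<and> e\<^sub>2 ! s = h\<^sub>2 (T\<^sub>2 (take s e\<^sub>1) (take s e\<^sub>2))"
      and pm: "e\<^sub>1 \<in> pm_seqs (Suc t)" "e\<^sub>2 \<in> pm_seqs (Suc t)"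
    unfolding joint_sign_patterns_def by auto
  obtain a e\<^sub>1' where e\<^sub>1: "e\<^sub>1 = a # e\<^sub>1'" using pm by (cases e\<^sub>1) (auto simp: pm_seqs_def)
  obtain b e\<^sub>2' where e\<^sub>2: "e\<^sub>2 = b # e\<^sub>2'" using pm by (cases e\<^sub>2) (auto simp: pm_seqs_def)
  have ab: "a \<in> {1, -1}" "b \<in> {1, -1}"
    and pm': "e\<^sub>1' \<in> pm_seqs t" "e\<^sub>2' \<in> pm_seqs t"
    using pm e\<^sub>1 e\<^sub>2 by (auto simp: pm_seqs_def)
  have "h\<^sub>1 \<in> restrict_value H\<^sub>1 (T\<^sub>1 [] []) a" "h\<^sub>2 \<in> restrict_value H\<^sub>2 (T\<^sub>2 [] []) b"
    using h path[rule_format, of 0] e\<^sub>1 e\<^sub>2 by (auto simp: restrict_value_def)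
  moreover have "\<forall>s<t. e\<^sub>1' ! s = h\<^sub>1 (T\<^sub>1 (a # take s e\<^sub>1') (b # take s e\<^sub>2'))
                     \<and> e\<^sub>2' ! s = h\<^sub>2 (T\<^sub>2 (a # take s e\<^sub>1') (b # take s e\<^sub>2'))"
    using path e\<^sub>1 e\<^sub>2 by (auto dest: spec[of _ "Suc _"])
  ultimately have "(e\<^sub>1', e\<^sub>2') \<in> joint_sign_patterns (restrict_value H\<^sub>1 (T\<^sub>1 [] []) a)
      (restrict_value H\<^sub>2 (T\<^sub>2 [] []) b) (\<lambda>p q. T\<^sub>1 (a # p) (b # q)) (\<lambda>p q. T\<^sub>2 (a # p) (b # q)) t"
    unfolding joint_sign_patterns_def using pm' by blast
  then show "(e\<^sub>1, e\<^sub>2) \<in> (\<Union>a\<in>{1, -1}. \<Union>b\<in>{1, -1}.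
     (\<lambda>(e\<^sub>1, e\<^sub>2). (a # e\<^sub>1, b # e\<^sub>2)) `
       joint_sign_patterns (restrict_value H\<^sub>1 (T\<^sub>1 [] []) a) (restrict_value H\<^sub>2 (T\<^sub>2 [] []) b)
         (\<lambda>p q. T\<^sub>1 (a # p) (b # q)) (\<lambda>p q. T\<^sub>2 (a # p) (b # q)) t)"
    using ab unfolding e\<^sub>1 e\<^sub>2 by (intro UN_I[of a] UN_I[of b] rev_image_eqI) auto
qed

lemma card_joint_sign_patterns_le:
  "card (joint_sign_patterns H\<^sub>1 H\<^sub>2 T\<^sub>1 T\<^sub>2 t) \<le> seq_shatter H\<^sub>1 t * seq_shatter H\<^sub>2 t"
proof (induction t arbitrary: H\<^sub>1 H\<^sub>2 T\<^sub>1 T\<^sub>2)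
  case 0
  have "joint_sign_patterns H\<^sub>1 H\<^sub>2 T\<^sub>1 T\<^sub>2 0 \<subseteq> (if H\<^sub>1 = {} \<or> H\<^sub>2 = {} then {} else {([], [])})"
    by (auto simp: joint_sign_patterns_def pm_seqs_def)
  then have "card (joint_sign_patterns H\<^sub>1 H\<^sub>2 T\<^sub>1 T\<^sub>2 0)
      \<le> card (if H\<^sub>1 = {} \<or> H\<^sub>2 = {} then {} else {([], [])} :: (int list \<times> int list) set)"
    by (intro card_mono) auto
  then show ?case by (auto simp: seq_shatter_def split: if_splits)
next
  case (Suc t)
  define S\<^sub>1 where "S\<^sub>1 a = seq_shatter (restrict_value H\<^sub>1 (T\<^sub>1 [] []) a) t" for a
  define S\<^sub>2 where "S\<^sub>2 b = seq_shatter (restrict_value H\<^sub>2 (T\<^sub>2 [] []) b) t" for b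
  define Q where "Q a b = (\<lambda>(e\<^sub>1, e\<^sub>2). (a # e\<^sub>1, b # e\<^sub>2)) `
       joint_sign_patterns (restrict_value H\<^sub>1 (T\<^sub>1 [] []) a) (restrict_value H\<^sub>2 (T\<^sub>2 [] []) b)
         (\<lambda>p q. T\<^sub>1 (a # p) (b # q)) (\<lambda>p q. T\<^sub>2 (a # p) (b # q)) t" for a b
  have card_Q: "card (Q a b) \<le> S\<^sub>1 a * S\<^sub>2 b" for a b
    unfolding Q_def S\<^sub>1_def S\<^sub>2_def
    using card_image_le[OF finite_joint_sign_patterns] Suc.IH le_trans by blast
  have "joint_sign_patterns H\<^sub>1 H\<^sub>2 T\<^sub>1 T\<^sub>2 (Suc t) \<subseteq> Q 1 1 \<union> Q 1 (-1) \<union> Q (-1) 1 \<union> Q (-1) (-1)"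
    using joint_sign_patterns_Suc_subset[of H\<^sub>1 H\<^sub>2 T\<^sub>1 T\<^sub>2 t] unfolding Q_def by auto
  then have "card (joint_sign_patterns H\<^sub>1 H\<^sub>2 T\<^sub>1 T\<^sub>2 (Suc t))
      \<le> card (Q 1 1 \<union> Q 1 (-1) \<union> Q (-1) 1 \<union> Q (-1) (-1))"
    by (rule card_mono[rotated]) (auto simp: Q_def finite_joint_sign_patterns)
  also have "\<dots> \<le> card (Q 1 1) + card (Q 1 (-1)) + card (Q (-1) 1) + card (Q (-1) (-1))"
    by (meson add_mono card_Un_le le_refl order_trans)
  also have "\<dots> \<le> S\<^sub>1 1 * S\<^sub>2 1 + S\<^sub>1 1 * S\<^sub>2 (-1) + S\<^sub>1 (-1) * S\<^sub>2 1 + S\<^sub>1 (-1) * S\<^sub>2 (-1)"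
    by (intro add_mono card_Q)
  also have "\<dots> = (S\<^sub>1 1 + S\<^sub>1 (-1)) * (S\<^sub>2 1 + S\<^sub>2 (-1))"
    by (simp add: algebra_simps)
  also have "\<dots> \<le> seq_shatter H\<^sub>1 (Suc t) * seq_shatter H\<^sub>2 (Suc t)"
    unfolding S\<^sub>1_def S\<^sub>2_def by (intro mult_le_mono seq_shatter_restrict_value_add_le)
  finally show ?case .
qed

lemma tree_sign_patterns_prod_class_subset:
  assumes "\<forall>h\<in>H\<^sub>1. pm_hyp h" and "\<forall>h\<in>H\<^sub>2. pm_hyp h"
  shows "tree_sign_patterns (prod_class H\<^sub>1 H\<^sub>2) t tr
    \<subseteq> (\<lambda>(e\<^sub>1, e\<^sub>2). map2 (*) e\<^sub>1 e\<^sub>2) ` joint_sign_patterns H\<^sub>1 H\<^sub>2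
          (\<lambda>p q. tr (map2 (*) p q)) (\<lambda>p q. tr (map2 (*) p q)) t"
proof
  fix e assume "e \<in> tree_sign_patterns (prod_class H\<^sub>1 H\<^sub>2) t tr"
  then obtain h\<^sub>1 h\<^sub>2 where e: "e \<in> pm_seqs t" "h\<^sub>1 \<in> H\<^sub>1" "h\<^sub>2 \<in> H\<^sub>2"
      and path: "\<forall>s<t. e ! s = h\<^sub>1 (tr (take s e)) * h\<^sub>2 (tr (take s e))"
    by (auto simp: tree_sign_patterns_def prod_class_def)
  define e\<^sub>1 where "e\<^sub>1 = map (\<lambda>s. h\<^sub>1 (tr (take s e))) [0..<t]"
  define e\<^sub>2 where "e\<^sub>2 = map (\<lambda>s. h\<^sub>2 (tr (take s e))) [0..<t]"
  have e_eq: "map2 (*) e\<^sub>1 e\<^sub>2 = e"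
    using e(1) path by (intro nth_equalityI) (auto simp: e\<^sub>1_def e\<^sub>2_def pm_seqs_def)
  then have "map2 (*) (take s e\<^sub>1) (take s e\<^sub>2) = take s e" for s
    by (metis take_map take_zip)
  moreover have "e\<^sub>1 \<in> pm_seqs t" "e\<^sub>2 \<in> pm_seqs t"
    using assms e(2,3) by (auto simp: e\<^sub>1_def e\<^sub>2_def pm_seqs_def pm_hyp_def)
  ultimately have "(e\<^sub>1, e\<^sub>2) \<in> joint_sign_patterns H\<^sub>1 H\<^sub>2
      (\<lambda>p q. tr (map2 (*) p q)) (\<lambda>p q. tr (map2 (*) p q)) t"
    unfolding joint_sign_patterns_def using e(2,3) by (auto simp: e\<^sub>1_def e\<^sub>2_def)
  then show "e \<in> (\<lambda>(e\<^sub>1, e\<^sub>2). map2 (*) e\<^sub>1 e\<^sub>2) ` joint_sign_patterns H\<^sub>1 H\<^sub>2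
      (\<lambda>p q. tr (map2 (*) p q)) (\<lambda>p q. tr (map2 (*) p q)) t"
    using e_eq by force
qed

theorem mainTheorem15:
  fixes H1 H2 :: "('a \<Rightarrow> int) set" and t :: nat
  assumes "\<forall>h\<in>H1. pm_hyp h" and "\<forall>h\<in>H2. pm_hyp h"
  shows "seq_shatter (prod_class H1 H2) t \<le> seq_shatter H1 t * seq_shatter H2 t"
proof -
  obtain tr where tr: "seq_shatter (prod_class H1 H2) t
      = card (tree_sign_patterns (prod_class H1 H2) t tr)"
    by (rule seq_shatter_attained)
  let ?T = "\<lambda>p q. tr (map2 (*) p q)"
  have "card (tree_sign_patterns (prod_class H1 H2) t tr)
      \<le> card ((\<lambda>(e\<^sub>1, e\<^sub>2). map2 (*) e\<^sub>1 e\<^sub>2) ` joint_sign_patterns H1 H2 ?T ?T t)"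
    using tree_sign_patterns_prod_class_subset[OF assms]
    by (rule card_mono[rotated]) (simp add: finite_joint_sign_patterns)
  also have "\<dots> \<le> card (joint_sign_patterns H1 H2 ?T ?T t)"
    by (rule card_image_le[OF finite_joint_sign_patterns])
  also have "\<dots> \<le> seq_shatter H1 t * seq_shatter H2 t"
    by (rule card_joint_sign_patterns_le)
  finally show ?thesis unfolding tr .
qed

end
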